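(* Let $\mathbb{F}$ be a field and let $P_i(\lambda)\in \mathbb{F}[\lambda]^{m_i\times n}$, $i=1,\ldots,k$ ($k\ge 1$), be polynomial matrices such that $m:=\sum_{i=1}^k m_i\ge n$. Let $P(\lambda)\in\mathbb{F}[\lambda]^{m\times n}$ be the compound matrix obtained by stacking $P_1(\lambda),\ldots,P_k(\lambda)$ vertically, and assume $r:=\operatorname{rank}P(\lambda)\ge 1$ (normal rank). Then for $G(\lambda)\in\mathbb{F}[\lambda]^{r\times n}$ the following are equivalent: (1) $G(\lambda)$ is a compact GCRD of $\{P_i(\lambda)\}_{i=1}^k$; (2) there exists a left invertible polynomial matrix $N(\lambda)\in\mathbb{F}[\lambda]^{m\times r}$ such that $P(\lambda)=N(\lambda)G(\lambda)$; (3) there exists a unimodular matrix $U(\lambda)\in\mathbb{F}[\lambda]^{m\times m}$ such that $P(\lambda)=U(\lambda)\begin{bmatrix} G(\lambda)\\ 0\end{bmatrix}$. Moreover, any compact GCRD $G(\lambda)$ of $\{P_i(\lambda)\}_{i=1}^k$ can be written as $G(\lambda)=\sum_{i=1}^k L_i(\lambda)P_i(\lambda)$ for some polynomial matrices $L_i(\lambda)\in\mathbb{F}[\lambda]^{r\times m_i}$; equivalently, $G(\lambda)=L(\lambda)P(\lambda)$ for some $L(\lambda)\in\mathbb{F}[\lambda]^{r\times m}$.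
   Context: A matrix $D(\lambda)\in\mathbb{F}[\lambda]^{p\times n}$ is a common right divisor (CRD) of $\{P_i(\lambda)\}_{i=1}^k$ if there are polynomial matrices $Q_i(\lambda)\in\mathbb{F}[\lambda]^{m_i\times p}$ with $P_i(\lambda)=Q_i(\lambda)D(\lambda)$ for all $i$. A matrix $G(\lambda)\in\mathbb{F}[\lambda]^{\ell\times n}$ is a greatest common right divisor (GCRD) if it is a CRD and for every CRD $D(\lambda)\in\mathbb{F}[\lambda]^{p\times n}$ there is a polynomial $Q(\lambda)\in\mathbb{F}[\lambda]^{\ell\times p}$ with $G(\lambda)=Q(\lambda)D(\lambda)$. A GCRD (resp. CRD) with exactly $r$ rows, where $r$ is the normal rank of the compound matrix, is called compact. The normal rank is the rank over the field of fractions $\mathbb{F}(\lambda)$. A square polynomial matrix is unimodular if its determinant is a nonzero constant; $N(\lambda)$ is left invertible if there is a polynomial matrix $L(\lambda)$ with $L(\lambda)N(\lambda)=I$. *)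

theory Defs
  imports "Jordan_Normal_Form.DL_Rank" "Jordan_Normal_Form.Determinant"
    "HOL-Computational_Algebra.Polynomial" "HOL-Computational_Algebra.Fraction_Field"
begin

definition stack :: "nat \<Rightarrow> 'a::zero mat list \<Rightarrow> 'a mat" where
  "stack n Ps = foldr (\<lambda>A B. A @\<^sub>r B) Ps (0\<^sub>m 0 n)"

definition normal_rank :: "'a::field poly mat \<Rightarrow> nat" where
  "normal_rank A = vec_space.rank (dim_row A) (map_mat to_fract A)"

definition is_CRD :: "nat \<Rightarrow> 'a::comm_ring_1 mat list \<Rightarrow> 'a mat \<Rightarrow> bool" where
  "is_CRD n Ps D \<longleftrightarrow> dim_col D = n \<and>
     (\<forall>P \<in> set Ps. \<exists>Q \<in> carrier_mat (dim_row P) (dim_row D). P = Q * D)"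

definition is_GCRD :: "nat \<Rightarrow> 'a::comm_ring_1 mat list \<Rightarrow> 'a mat \<Rightarrow> bool" where
  "is_GCRD n Ps G \<longleftrightarrow> is_CRD n Ps G \<and>
     (\<forall>D. is_CRD n Ps D \<longrightarrow> (\<exists>Q \<in> carrier_mat (dim_row G) (dim_row D). G = Q * D))"

definition is_compact_GCRD :: "nat \<Rightarrow> 'a::field poly mat list \<Rightarrow> 'a poly mat \<Rightarrow> bool" where
  "is_compact_GCRD n Ps G \<longleftrightarrow> is_GCRD n Ps G \<and> dim_row G = normal_rank (stack n Ps)"

definition unimodular :: "'a::field poly mat \<Rightarrow> bool" where
  "unimodular U \<longleftrightarrow> dim_row U = dim_col U \<and> det U \<noteq> 0 \<and> degree (det U) = 0"

definition left_invertible :: "'a::comm_ring_1 mat \<Rightarrow> bool" where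
  "left_invertible N \<longleftrightarrow>
     (\<exists>L \<in> carrier_mat (dim_col N) (dim_row N). L * N = 1\<^sub>m (dim_col N))"

end

theory Submission
  imports Defs
begin

text \<open>
  Write \<open>P\<close> for the compound matrix. A common right divisor \<open>D\<close> of the blocks is the same thing
  as a right factor \<open>P = Q D\<close> of \<open>P\<close>. If \<open>P = N G\<close> with \<open>L N = I\<close>, then \<open>G = L P = L Q D\<close> for every
  such factor, so \<open>G\<close> is a GCRD. Conversely, a GCRD \<open>G\<close> with \<open>r\<close> rows gives \<open>P = N G\<close> and
  \<open>G = Q P = Q N G\<close>; since \<open>N G\<close> has normal rank \<open>r\<close>, the rows of \<open>G\<close> are independent over
  the fraction field and \<open>Q N = I\<close>. Finally, a left invertible \<open>N\<close> over the Euclidean ring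
  \<open>F[\<lambda>]\<close> can be brought to \<open>[I; 0]\<close> by invertible row operations (Euclid's algorithm down
  each column, the pivot being a unit because \<open>N\<close> has a left inverse), i.e. \<open>N = U [I; 0]\<close> with
  \<open>U\<close> unimodular.
\<close>

lemma left_invertibleI:
  "N \<in> carrier_mat m r \<Longrightarrow> L \<in> carrier_mat r m \<Longrightarrow> L * N = 1\<^sub>m r \<Longrightarrow> left_invertible N"
  unfolding left_invertible_def by auto

lemma left_invertibleE:
  assumes "left_invertible N" and "N \<in> carrier_mat m r"
  obtains L where "L \<in> carrier_mat r m" and "L * N = 1\<^sub>m r"
  using assms unfolding left_invertible_def by auto

lemma left_invertible_mult:
  assumes A: "A \<in> carrier_mat m k" and B: "B \<in> carrier_mat k r"
    and "left_invertible A" and "left_invertible B"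
  shows "left_invertible (A * B)"
proof -
  obtain LA where LA: "LA \<in> carrier_mat k m" "LA * A = 1\<^sub>m k"
    using \<open>left_invertible A\<close> A by (rule left_invertibleE)
  obtain LB where LB: "LB \<in> carrier_mat r k" "LB * B = 1\<^sub>m r"
    using \<open>left_invertible B\<close> B by (rule left_invertibleE)
  have "(LB * LA) * (A * B) = LB * (LA * (A * B))"
    using A B LA LB by (intro assoc_mult_mat) auto
  also have "LA * (A * B) = (LA * A) * B"
    using A B LA by (intro assoc_mult_mat[symmetric]) auto
  also have "LB * ((LA * A) * B) = 1\<^sub>m r" using LA LB B by simp
  finally show ?thesis
    using A B LA LB by (intro left_invertibleI[of _ m r "LB * LA"]) auto
qed

lemma unimodular_if_mult_eq_one:
  fixes W V :: "'a::field poly mat"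
  assumes W: "W \<in> carrier_mat m m" and V: "V \<in> carrier_mat m m" and WV: "W * V = 1\<^sub>m m"
  shows "unimodular W" "unimodular V"
proof -
  have "det W * det V = 1" using det_mult[OF W V] WV by simp
  then have units: "is_unit (det W)" "is_unit (det V)" by (metis dvdI mult.commute)+
  then have "det W \<noteq> 0" "det V \<noteq> 0" by auto
  with units show "unimodular W" "unimodular V"
    using W V unfolding unimodular_def by (simp_all add: is_unit_iff_degree)
qed

lemma left_invertible_if_unimodular:
  fixes U :: "'a::field poly mat"
  assumes U: "U \<in> carrier_mat m m" and "unimodular U"
  shows "left_invertible U"
proof -
  have "is_unit (det U)" using \<open>unimodular U\<close> unfolding unimodular_def by (auto simp: is_unit_iff_degree)
  then obtain c where c: "c * det U = 1" by (metis dvdE mult.commute)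
  have "(c \<cdot>\<^sub>m adj_mat U) * U = c \<cdot>\<^sub>m (adj_mat U * U)"
    using adj_mat[OF U] U by (simp add: mult_smult_assoc_mat)
  also have "\<dots> = 1\<^sub>m m"
    using adj_mat[OF U] c by (auto intro!: eq_matI simp: mult.assoc[symmetric])
  finally show ?thesis
    using adj_mat[OF U] by (intro left_invertibleI[OF U, of "c \<cdot>\<^sub>m adj_mat U"]) auto
qed

lemma unimodular_iff_left_invertible:
  fixes U :: "'a::field poly mat"
  assumes U: "U \<in> carrier_mat m m"
  shows "unimodular U \<longleftrightarrow> left_invertible U"
proof
  assume "left_invertible U"
  then obtain L where "L \<in> carrier_mat m m" "L * U = 1\<^sub>m m" using U by (rule left_invertibleE)
  then show "unimodular U" using U by (intro unimodular_if_mult_eq_one(2))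
qed (rule left_invertible_if_unimodular[OF U])

lemma dim_append_rows [simp]:
  "dim_row (A @\<^sub>r B) = dim_row A + dim_row B" "dim_col (A @\<^sub>r B) = dim_col A"
  unfolding append_rows_def by simp_all

lemma index_append_rows:
  assumes "i < dim_row A + dim_row B" and "j < dim_col A"
  shows "(A @\<^sub>r B) $$ (i, j) = (if i < dim_row A then A $$ (i, j) else B $$ (i - dim_row A, j))"
  using assms unfolding append_rows_def by simp

lemma append_rows_mult:
  assumes A: "A \<in> carrier_mat p k" and B: "B \<in> carrier_mat q k" and D: "D \<in> carrier_mat k c"
  shows "(A @\<^sub>r B) * D = (A * D) @\<^sub>r (B * D)"
proof -
  have "D = four_block_mat D (0\<^sub>m k 0) (0\<^sub>m 0 c) (0\<^sub>m 0 0)" using D by (intro eq_matI) auto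
  then have "(A @\<^sub>r B) * D =
      four_block_mat A (0\<^sub>m p 0) B (0\<^sub>m q 0) * four_block_mat D (0\<^sub>m k 0) (0\<^sub>m 0 c) (0\<^sub>m 0 0)"
    using A B unfolding append_rows_def by simp
  also have "\<dots> = (A * D) @\<^sub>r (B * D)"
    using A B D unfolding append_rows_def by (subst mult_four_block_mat) auto
  finally show ?thesis .
qed

lemma append_rows_split:
  assumes "N \<in> carrier_mat (p + q) k"
  obtains N1 N2 where "N1 \<in> carrier_mat p k" "N2 \<in> carrier_mat q k" "N = N1 @\<^sub>r N2"
proof -
  obtain N1 N2 N3 N4 where split: "split_block N p k = (N1, N2, N3, N4)"
    by (cases "split_block N p k") auto
  note blocks = split_block[OF split, of q 0]
  have "N2 = 0\<^sub>m p 0" "N4 = 0\<^sub>m q 0" using blocks(2,4) assms by (auto intro!: eq_matI)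
  then show ?thesis using that blocks assms unfolding append_rows_def by auto
qed

lemma append_rows_inject:
  assumes A: "A \<in> carrier_mat p c" "A' \<in> carrier_mat p c" and B: "B \<in> carrier_mat q c" "B' \<in> carrier_mat q c"
  shows "A @\<^sub>r B = A' @\<^sub>r B' \<longleftrightarrow> A = A' \<and> B = B'"
proof
  assume eq: "A @\<^sub>r B = A' @\<^sub>r B'"
  have entries: "(A @\<^sub>r B) $$ (i, j) = (A' @\<^sub>r B') $$ (i, j)" for i j using eq by simp
  have "A $$ (i, j) = A' $$ (i, j)" if "i < p" "j < c" for i j
    using that A B entries[of i j] index_append_rows[of i A B j] index_append_rows[of i A' B' j] by auto
  moreover have "B $$ (i, j) = B' $$ (i, j)" if "i < q" "j < c" for i j
    using that A B entries[of "p + i" j]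
      index_append_rows[of "p + i" A B j] index_append_rows[of "p + i" A' B' j] by auto
  ultimately show "A = A' \<and> B = B'" using A B by (auto intro!: eq_matI)
qed simp

lemma mult_append_rows_split:
  assumes L: "L \<in> carrier_mat r (p + q)" and A: "A \<in> carrier_mat p n" and B: "B \<in> carrier_mat q n"
  obtains L1 L2 where "L1 \<in> carrier_mat r p" "L2 \<in> carrier_mat r q" "L * (A @\<^sub>r B) = L1 * A + L2 * B"
proof -
  obtain L1 L2 L3 L4 where split: "split_block L r p = (L1, L2, L3, L4)"
    by (cases "split_block L r p") auto
  have dims: "dim_row L = r + 0" "dim_col L = p + q" using L by auto
  note blocks = split_block[OF split dims]
  have "L * (A @\<^sub>r B) = four_block_mat L1 L2 L3 L4 * four_block_mat A (0\<^sub>m p 0) B (0\<^sub>m q 0)"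
    using blocks(5) A B unfolding append_rows_def by simp
  also have "\<dots> = four_block_mat (L1 * A + L2 * B) (L1 * 0\<^sub>m p 0 + L2 * 0\<^sub>m q 0)
      (L3 * A + L4 * B) (L3 * 0\<^sub>m p 0 + L4 * 0\<^sub>m q 0)"
    by (rule mult_four_block_mat[OF blocks(1-4) A zero_carrier_mat B zero_carrier_mat])
  also have "\<dots> = L1 * A + L2 * B"
    using blocks(1-4) A B by (intro eq_matI) auto
  finally show ?thesis using that blocks(1,2) by blast
qed

lemma append_rows_eq_mult_iff:
  assumes P: "P \<in> carrier_mat h n" and S: "S \<in> carrier_mat q n" and D: "D \<in> carrier_mat p n"
  shows "(\<exists>Q \<in> carrier_mat (h + q) p. P @\<^sub>r S = Q * D) \<longleftrightarrow>
         (\<exists>Q1 \<in> carrier_mat h p. P = Q1 * D) \<and> (\<exists>Q2 \<in> carrier_mat q p. S = Q2 * D)"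
proof
  assume "\<exists>Q \<in> carrier_mat (h + q) p. P @\<^sub>r S = Q * D"
  then obtain Q where Q: "Q \<in> carrier_mat (h + q) p" and eq: "P @\<^sub>r S = Q * D" by blast
  obtain Q1 Q2 where Q1: "Q1 \<in> carrier_mat h p" and Q2: "Q2 \<in> carrier_mat q p" and "Q = Q1 @\<^sub>r Q2"
    by (rule append_rows_split[OF Q])
  then have "P @\<^sub>r S = (Q1 * D) @\<^sub>r (Q2 * D)" using eq append_rows_mult[OF Q1 Q2 D] by simp
  then have "P = Q1 * D" "S = Q2 * D"
    using append_rows_inject[OF P mult_carrier_mat[OF Q1 D] S mult_carrier_mat[OF Q2 D]] by blast+
  then show "(\<exists>Q1 \<in> carrier_mat h p. P = Q1 * D) \<and> (\<exists>Q2 \<in> carrier_mat q p. S = Q2 * D)"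
    using Q1 Q2 by blast
next
  assume "(\<exists>Q1 \<in> carrier_mat h p. P = Q1 * D) \<and> (\<exists>Q2 \<in> carrier_mat q p. S = Q2 * D)"
  then obtain Q1 Q2 where Q1: "Q1 \<in> carrier_mat h p" and Q2: "Q2 \<in> carrier_mat q p"
    and eqs: "P = Q1 * D" "S = Q2 * D" by blast
  have "P @\<^sub>r S = (Q1 @\<^sub>r Q2) * D" unfolding append_rows_mult[OF Q1 Q2 D] eqs ..
  then show "\<exists>Q \<in> carrier_mat (h + q) p. P @\<^sub>r S = Q * D" using carrier_append_rows[OF Q1 Q2] by blast
qed

lemma left_invertible_identity_block: "left_invertible (1\<^sub>m r @\<^sub>r 0\<^sub>m k r :: 'a::comm_ring_1 mat)"
proof -
  let ?T = "1\<^sub>m r @\<^sub>r 0\<^sub>m k r :: 'a mat"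
  have T: "?T \<in> carrier_mat (r + k) r" by auto
  have inverse: "mat r (r + k) (\<lambda>(i, j). if i = j then 1 else 0) * ?T = 1\<^sub>m r"
  proof (rule eq_matI)
    fix a b assume "a < dim_row (1\<^sub>m r :: 'a mat)" "b < dim_col (1\<^sub>m r :: 'a mat)"
    then have ab: "a < r" "b < r" by auto
    have "(mat r (r + k) (\<lambda>(i, j). if i = j then 1 else 0) * ?T) $$ (a, b) =
        (\<Sum>i = 0..<r + k. (if a = i then 1 else 0) * ?T $$ (i, b))"
      using T ab by (simp add: scalar_prod_def)
    also have "\<dots> = ?T $$ (a, b)"
      using ab by (simp add: if_distrib[of "\<lambda>x. x * _"] cong: if_cong)
    also have "\<dots> = 1\<^sub>m r $$ (a, b)" using ab by (simp add: index_append_rows)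
    finally show "(mat r (r + k) (\<lambda>(i, j). if i = j then 1 else 0) * ?T) $$ (a, b) = 1\<^sub>m r $$ (a, b)" .
  qed (use T in auto)
  show ?thesis by (rule left_invertibleI[OF T _ inverse]) simp
qed

text \<open>A square matrix with a left inverse over a commutative ring is invertible, so this is the
  usual row equivalence.\<close>

definition row_equivalent :: "'a::comm_ring_1 mat \<Rightarrow> 'a mat \<Rightarrow> bool" where
  "row_equivalent A B \<longleftrightarrow>
     (\<exists>V \<in> carrier_mat (dim_row A) (dim_row A). left_invertible V \<and> B = V * A)"

lemma row_equivalentI:
  assumes "A \<in> carrier_mat m c" "V \<in> carrier_mat m m" "L \<in> carrier_mat m m" "L * V = 1\<^sub>m m"
    and "B = V * A"
  shows "row_equivalent A B"
  using assms left_invertibleI[of V m m L] unfolding row_equivalent_def by auto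

lemma row_equivalent_refl: "A \<in> carrier_mat m c \<Longrightarrow> row_equivalent A A"
  by (rule row_equivalentI[of _ m c "1\<^sub>m m" "1\<^sub>m m"]) auto

lemma row_equivalent_carrier: "A \<in> carrier_mat m c \<Longrightarrow> row_equivalent A B \<Longrightarrow> B \<in> carrier_mat m c"
  unfolding row_equivalent_def by auto

lemma row_equivalent_trans:
  assumes A: "A \<in> carrier_mat m c" and "row_equivalent A B" and "row_equivalent B C"
  shows "row_equivalent A C"
proof -
  obtain V where V: "V \<in> carrier_mat m m" "left_invertible V" "B = V * A"
    using assms unfolding row_equivalent_def by auto
  moreover obtain W where W: "W \<in> carrier_mat m m" "left_invertible W" "C = W * B"
    using assms V unfolding row_equivalent_def by auto
  ultimately have "C = (W * V) * A" using A by (simp add: assoc_mult_mat[OF W(1) V(1) A])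
  moreover have "left_invertible (W * V)" using V W by (intro left_invertible_mult)
  ultimately show ?thesis unfolding row_equivalent_def using A V W by auto
qed

lemma left_invertible_if_row_equivalent:
  assumes "A \<in> carrier_mat m c" "left_invertible A" "row_equivalent A B"
  shows "left_invertible B"
  using assms left_invertible_mult unfolding row_equivalent_def by auto

lemma row_equivalent_addrow:
  assumes A: "A \<in> carrier_mat m c" and kl: "k < m" "l < m" "k \<noteq> l"
  shows "row_equivalent A (addrow a k l A)"
  using addrow_mat_inv[OF kl, where a = "- a"]
  by (intro row_equivalentI[OF A addrow_mat_carrier addrow_mat_carrier _ addrow_mat[OF A kl(2)]]) simp

lemma row_equivalent_swaprows:
  assumes A: "A \<in> carrier_mat m c" and kl: "k < m" "l < m"
  shows "row_equivalent A (swaprows k l A)"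
  by (rule row_equivalentI[OF A swaprows_mat_carrier swaprows_mat_carrier
        swaprows_mat_inv[OF kl] swaprows_mat[OF A kl]])

lemma row_equivalent_multrow:
  assumes A: "A \<in> carrier_mat m c" and "d * a = 1"
  shows "row_equivalent A (multrow k a A)"
proof -
  have "multrow_mat m k d * multrow_mat m k a = multrow k d (multrow_mat m k a)"
    by (rule multrow_mat[symmetric, OF multrow_mat_carrier])
  also have "\<dots> = 1\<^sub>m m" using assms(2) by (intro eq_matI) auto
  finally show ?thesis
    by (rule row_equivalentI[OF A multrow_mat_carrier multrow_mat_carrier _ multrow_mat[OF A]])
qed

lemma row_equivalent_eliminate_entry:
  fixes A :: "'a::euclidean_ring mat"
  assumes A: "A \<in> carrier_mat m c" and ik: "i < m" "k < m" "i \<noteq> k" and j: "j < c"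
  shows "\<exists>B. row_equivalent A B \<and> B $$ (k, j) = 0
    \<and> (\<forall>a < m. a \<noteq> i \<longrightarrow> a \<noteq> k \<longrightarrow> (\<forall>b < c. B $$ (a, b) = A $$ (a, b)))
    \<and> (\<forall>b < c. A $$ (i, b) = 0 \<longrightarrow> A $$ (k, b) = 0 \<longrightarrow> B $$ (i, b) = 0 \<and> B $$ (k, b) = 0)"
  using A
proof (induction "euclidean_size (A $$ (k, j))" arbitrary: A rule: less_induct)
  case less
  show ?case
  proof (cases "A $$ (k, j) = 0")
    case True
    then show ?thesis using row_equivalent_refl[OF less.prems] by blast
  next
    case False
    \<comment> \<open>one step of Euclid's algorithm in column j: afterwards entry (k, j) is A(i, j) mod A(k, j)\<close>
    define A' where "A' = swaprows i k (addrow (- (A $$ (i, j) div A $$ (k, j))) i k A)"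
    have A': "A' \<in> carrier_mat m c" using less.prems unfolding A'_def by simp
    have AA': "row_equivalent A A'"
      unfolding A'_def using less.prems ik
      by (meson addrow_carrier row_equivalent_addrow row_equivalent_swaprows row_equivalent_trans)
    have "A' $$ (k, j) = A $$ (i, j) mod A $$ (k, j)"
      using less.prems ik j by (simp add: A'_def minus_div_mult_eq_mod[symmetric])
    then have "euclidean_size (A' $$ (k, j)) < euclidean_size (A $$ (k, j))"
      using False by (simp add: mod_size_less)
    from less.hyps[OF this A'] obtain B where B: "row_equivalent A' B" "B $$ (k, j) = 0"
      and rows: "\<forall>a < m. a \<noteq> i \<longrightarrow> a \<noteq> k \<longrightarrow> (\<forall>b < c. B $$ (a, b) = A' $$ (a, b))"
      and zeros: "\<forall>b < c. A' $$ (i, b) = 0 \<longrightarrow> A' $$ (k, b) = 0 \<longrightarrow> B $$ (i, b) = 0 \<and> B $$ (k, b) = 0"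
      by blast
    show ?thesis
    proof (intro exI[of _ B] conjI allI impI)
      show "row_equivalent A B" by (rule row_equivalent_trans[OF less.prems AA' B(1)])
    qed (use B rows zeros less.prems ik in \<open>auto simp: A'_def\<close>)
  qed
qed

definition identity_cols :: "nat \<Rightarrow> 'a::comm_ring_1 mat \<Rightarrow> bool" where
  "identity_cols j A \<longleftrightarrow> (\<forall>a < dim_row A. \<forall>b < j. A $$ (a, b) = (if a = b then 1 else 0))"

lemma row_equivalent_clear_entry_below:
  fixes A :: "'a::euclidean_ring mat"
  assumes A: "A \<in> carrier_mat m c" and jk: "j < k" "k < m" and "j < c" and "identity_cols j A"
  shows "\<exists>B. row_equivalent A B \<and> identity_cols j B \<and> B $$ (k, j) = 0
    \<and> (\<forall>a < m. a \<noteq> j \<longrightarrow> a \<noteq> k \<longrightarrow> B $$ (a, j) = A $$ (a, j))"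
proof -
  have "j < m" "j \<noteq> k" using jk by auto
  then obtain B where AB: "row_equivalent A B" and "B $$ (k, j) = 0"
    and rows: "\<forall>a < m. a \<noteq> j \<longrightarrow> a \<noteq> k \<longrightarrow> (\<forall>b < c. B $$ (a, b) = A $$ (a, b))"
    and zeros: "\<forall>b < c. A $$ (j, b) = 0 \<longrightarrow> A $$ (k, b) = 0 \<longrightarrow> B $$ (j, b) = 0 \<and> B $$ (k, b) = 0"
    using row_equivalent_eliminate_entry[OF A _ jk(2) _ \<open>j < c\<close>] by blast
  have B: "B \<in> carrier_mat m c" by (rule row_equivalent_carrier[OF A AB])
  have "identity_cols j B"
    unfolding identity_cols_def
  proof (intro allI impI)
    fix a b assume a: "a < dim_row B" and b: "b < j"
    have "A $$ (j, b) = 0" "A $$ (k, b) = 0"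
      using \<open>identity_cols j A\<close> A b jk unfolding identity_cols_def by auto
    then show "B $$ (a, b) = (if a = b then 1 else 0)"
      using rows zeros \<open>identity_cols j A\<close> A B a b jk \<open>j < c\<close> unfolding identity_cols_def
      by (cases "a = j \<or> a = k") auto
  qed
  then show ?thesis using AB \<open>B $$ (k, j) = 0\<close> rows \<open>j < c\<close> by blast
qed

lemma row_equivalent_clear_below:
  fixes A :: "'a::euclidean_ring mat"
  assumes A: "A \<in> carrier_mat m c" and "j < c" and "identity_cols j A"
  shows "\<exists>B. row_equivalent A B \<and> identity_cols j B \<and> (\<forall>k. j < k \<longrightarrow> k < m \<longrightarrow> B $$ (k, j) = 0)"
proof -
  have "\<exists>B. row_equivalent A B \<and> identity_cols j B \<and>
      (\<forall>k. j < k \<longrightarrow> k \<le> j + d \<longrightarrow> k < m \<longrightarrow> B $$ (k, j) = 0)" for d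
  proof (induction d)
    case 0
    then show ?case using row_equivalent_refl[OF A] assms(3) by auto
  next
    case (Suc d)
    then obtain B where AB: "row_equivalent A B" and B: "identity_cols j B"
      and below: "\<forall>k. j < k \<longrightarrow> k \<le> j + d \<longrightarrow> k < m \<longrightarrow> B $$ (k, j) = 0" by blast
    show ?case
    proof (cases "Suc (j + d) < m")
      case False
      then show ?thesis using AB B below by (metis add_Suc_right le_SucE)
    next
      case True
      obtain C where BC: "row_equivalent B C" and "identity_cols j C" "C $$ (Suc (j + d), j) = 0"
        and "\<forall>a < m. a \<noteq> j \<longrightarrow> a \<noteq> Suc (j + d) \<longrightarrow> C $$ (a, j) = B $$ (a, j)"
        using row_equivalent_clear_entry_below[OF row_equivalent_carrier[OF A AB] _ True \<open>j < c\<close> B]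
        by auto
      then show ?thesis
        using row_equivalent_trans[OF A AB BC] below by (auto simp: le_Suc_eq)
    qed
  qed
  from this[of m] show ?thesis by auto
qed

lemma row_equivalent_clear_column:
  assumes A: "A \<in> carrier_mat m c" and j: "j < m" and l: "l < c" and pivot: "A $$ (j, l) = 1"
  shows "\<exists>B. row_equivalent A B \<and> (\<forall>a < m. B $$ (a, l) = (if a = j then 1 else 0))
    \<and> (\<forall>b < c. A $$ (j, b) = 0 \<longrightarrow> (\<forall>a < m. B $$ (a, b) = A $$ (a, b)))"
proof -
  have "\<exists>B. row_equivalent A B \<and> (\<forall>b < c. B $$ (j, b) = A $$ (j, b))
      \<and> (\<forall>a < d. a < m \<longrightarrow> a \<noteq> j \<longrightarrow> B $$ (a, l) = 0)
      \<and> (\<forall>b < c. A $$ (j, b) = 0 \<longrightarrow> (\<forall>a < m. B $$ (a, b) = A $$ (a, b)))" for d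
  proof (induction d)
    case 0
    then show ?case using row_equivalent_refl[OF A] by auto
  next
    case (Suc d)
    then obtain B where B: "row_equivalent A B" and row_j: "\<forall>b < c. B $$ (j, b) = A $$ (j, b)"
      and cleared: "\<forall>a < d. a < m \<longrightarrow> a \<noteq> j \<longrightarrow> B $$ (a, l) = 0"
      and kept: "\<forall>b < c. A $$ (j, b) = 0 \<longrightarrow> (\<forall>a < m. B $$ (a, b) = A $$ (a, b))" by blast
    have Bc: "B \<in> carrier_mat m c" by (rule row_equivalent_carrier[OF A B])
    show ?case
    proof (cases "d < m \<and> d \<noteq> j")
      case False
      then show ?thesis using B row_j cleared kept by (metis less_SucE)
    next
      case True
      define B' where "B' = addrow (- B $$ (d, l)) d j B"
      have dims: "dim_row B = m" "dim_col B = c" using Bc by auto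
      have "row_equivalent B B'" unfolding B'_def using Bc True j by (intro row_equivalent_addrow) auto
      moreover have "B' $$ (d, l) = 0" using True l row_j pivot by (simp add: B'_def dims)
      ultimately show ?thesis
        using row_equivalent_trans[OF A B] True row_j cleared kept l j
        by (intro exI[of _ B']) (auto simp: B'_def dims less_Suc_eq)
    qed
  qed
  from this[of m] obtain B where "row_equivalent A B" and "\<forall>b < c. B $$ (j, b) = A $$ (j, b)"
    and "\<forall>a < m. a \<noteq> j \<longrightarrow> B $$ (a, l) = 0"
    and "\<forall>b < c. A $$ (j, b) = 0 \<longrightarrow> (\<forall>a < m. B $$ (a, b) = A $$ (a, b))" by auto
  then show ?thesis using pivot l by (intro exI[of _ B]) auto
qed

lemma pivot_unit_if_left_invertible:
  assumes A: "A \<in> carrier_mat m r" and L: "L \<in> carrier_mat r m" "L * A = 1\<^sub>m r"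
    and j: "j < r" "j < m" and "identity_cols j A"
    and below: "\<forall>k. j < k \<longrightarrow> k < m \<longrightarrow> A $$ (k, j) = 0"
  shows "L $$ (j, j) * A $$ (j, j) = 1"
proof -
  have entry: "(L * A) $$ (j, b) = (\<Sum>k = 0..<m. L $$ (j, k) * A $$ (k, b))" if "b < r" for b
    using A L(1) j that by (simp add: scalar_prod_def)
  have left_zero: "L $$ (j, b) = 0" if "b < j" for b
  proof -
    have "(\<Sum>k = 0..<m. L $$ (j, k) * A $$ (k, b)) = (\<Sum>k = 0..<m. L $$ (j, k) * (if b = k then 1 else 0))"
      using \<open>identity_cols j A\<close> A that by (intro sum.cong) (auto simp: identity_cols_def)
    also have "\<dots> = L $$ (j, b)" using that j by (simp add: if_distrib[of "\<lambda>x. _ * x"] cong: if_cong)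
    finally show ?thesis using entry[of b] L that j by simp
  qed
  have "(\<Sum>k = 0..<m. L $$ (j, k) * A $$ (k, j)) = (\<Sum>k = 0..<m. if k = j then L $$ (j, j) * A $$ (j, j) else 0)"
    using left_zero below by (intro sum.cong) (auto simp: nat_neq_iff)
  then show ?thesis using entry[of j] L j by simp
qed

lemma row_equivalent_normalize_pivot:
  fixes A :: "'a::euclidean_ring mat"
  assumes A: "A \<in> carrier_mat m r" "left_invertible A" and j: "j < r" "j < m"
    and "identity_cols j A"
  shows "\<exists>B. row_equivalent A B \<and> identity_cols j B \<and> B $$ (j, j) = 1"
proof -
  obtain B where AB: "row_equivalent A B" and B: "identity_cols j B"
    and below: "\<forall>k. j < k \<longrightarrow> k < m \<longrightarrow> B $$ (k, j) = 0"
    using row_equivalent_clear_below[OF A(1) j(1) assms(5)] by blast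
  have Bc: "B \<in> carrier_mat m r" by (rule row_equivalent_carrier[OF A(1) AB])
  obtain L where L: "L \<in> carrier_mat r m" "L * B = 1\<^sub>m r"
    using left_invertible_if_row_equivalent[OF A AB] Bc by (rule left_invertibleE)
  have unit: "L $$ (j, j) * B $$ (j, j) = 1"
    by (rule pivot_unit_if_left_invertible[OF Bc L j B below])
  define B' where "B' = multrow j (L $$ (j, j)) B"
  have "row_equivalent B B'"
    unfolding B'_def by (rule row_equivalent_multrow[OF Bc]) (use unit in \<open>simp add: ac_simps\<close>)
  moreover have "identity_cols j B'"
    using B carrier_matD[OF Bc] j by (auto simp: B'_def identity_cols_def)
  moreover have "B' $$ (j, j) = 1" using Bc unit j by (simp add: B'_def)
  ultimately show ?thesis using row_equivalent_trans[OF A(1) AB] by blast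
qed

lemma row_equivalent_extend_identity_cols:
  fixes A :: "'a::euclidean_ring mat"
  assumes A: "A \<in> carrier_mat m r" "left_invertible A" and j: "j < r" "j < m"
    and "identity_cols j A"
  shows "\<exists>C. row_equivalent A C \<and> identity_cols (Suc j) C"
proof -
  obtain B where AB: "row_equivalent A B" and B: "identity_cols j B" and "B $$ (j, j) = 1"
    using row_equivalent_normalize_pivot[OF A j assms(5)] by blast
  have Bc: "B \<in> carrier_mat m r" by (rule row_equivalent_carrier[OF A(1) AB])
  then obtain C where BC: "row_equivalent B C"
    and col: "\<forall>a < m. C $$ (a, j) = (if a = j then 1 else 0)"
    and kept: "\<forall>b < r. B $$ (j, b) = 0 \<longrightarrow> (\<forall>a < m. C $$ (a, b) = B $$ (a, b))"
    using row_equivalent_clear_column[OF Bc j(2) j(1) \<open>B $$ (j, j) = 1\<close>] by blast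
  have Cc: "C \<in> carrier_mat m r" by (rule row_equivalent_carrier[OF Bc BC])
  \<comment> \<open>row j of B vanishes in the first j columns, so clearing column j leaves them intact\<close>
  have "identity_cols (Suc j) C"
    using B Bc Cc col kept j unfolding identity_cols_def by (auto simp: less_Suc_eq)
  then show ?thesis using row_equivalent_trans[OF A(1) AB BC] by blast
qed

lemma left_invertible_reduces_to_identity_block:
  fixes N :: "'a::euclidean_ring mat"
  assumes N: "N \<in> carrier_mat m r" "left_invertible N" and "r \<le> m"
  shows "\<exists>V \<in> carrier_mat m m. left_invertible V \<and> V * N = 1\<^sub>m r @\<^sub>r 0\<^sub>m (m - r) r"
proof -
  have "\<exists>B. row_equivalent N B \<and> identity_cols j B" if "j \<le> r" for j
    using that
  proof (induction j)
    case 0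
    show ?case using row_equivalent_refl[OF N(1)] by (auto simp: identity_cols_def)
  next
    case (Suc j)
    then obtain B where NB: "row_equivalent N B" and B: "identity_cols j B" by auto
    have "B \<in> carrier_mat m r" "left_invertible B"
      using row_equivalent_carrier[OF N(1) NB] left_invertible_if_row_equivalent[OF N NB] by auto
    then obtain C where "row_equivalent B C" "identity_cols (Suc j) C"
      using row_equivalent_extend_identity_cols[of B m r j] B Suc.prems \<open>r \<le> m\<close> by auto
    then show ?case using row_equivalent_trans[OF N(1) NB] by blast
  qed
  then obtain B where NB: "row_equivalent N B" and B: "identity_cols r B" by blast
  then obtain V where V: "V \<in> carrier_mat m m" "left_invertible V" "B = V * N"
    using N unfolding row_equivalent_def by auto
  let ?T = "1\<^sub>m r @\<^sub>r 0\<^sub>m (m - r) r :: 'a mat"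
  have T: "?T \<in> carrier_mat m r"
    using carrier_append_rows[of "1\<^sub>m r" r r "0\<^sub>m (m - r) r" "m - r"] \<open>r \<le> m\<close> by simp
  have Bc: "B \<in> carrier_mat m r" by (rule row_equivalent_carrier[OF N(1) NB])
  have "B = ?T"
  proof (rule eq_matI)
    fix i j assume "i < dim_row ?T" "j < dim_col ?T"
    then have "i < m" "j < r" using carrier_matD[OF T] by auto
    then show "B $$ (i, j) = ?T $$ (i, j)"
      using B Bc \<open>r \<le> m\<close> by (auto simp: identity_cols_def index_append_rows)
  qed (use Bc T in auto)
  then show ?thesis using V by auto
qed

lemma unimodular_completion_of_left_invertible:
  fixes N :: "'a::field poly mat"
  assumes N: "N \<in> carrier_mat m r" "left_invertible N" and "r \<le> m"
  shows "\<exists>U \<in> carrier_mat m m. unimodular U \<and> N = U * (1\<^sub>m r @\<^sub>r 0\<^sub>m (m - r) r)"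
proof -
  obtain V where V: "V \<in> carrier_mat m m" "left_invertible V" and VN: "V * N = 1\<^sub>m r @\<^sub>r 0\<^sub>m (m - r) r"
    using left_invertible_reduces_to_identity_block[OF N \<open>r \<le> m\<close>] by blast
  obtain W where W: "W \<in> carrier_mat m m" "W * V = 1\<^sub>m m"
    using V(2,1) by (rule left_invertibleE)
  have "N = (W * V) * N" using W(2) N(1) by simp
  also have "\<dots> = W * (1\<^sub>m r @\<^sub>r 0\<^sub>m (m - r) r)" using assoc_mult_mat[OF W(1) V(1) N(1)] VN by simp
  finally show ?thesis using W unimodular_if_mult_eq_one(1)[OF W(1) V(1) W(2)] by blast
qed

lemma unimodular_factor_iff_left_invertible_factor:
  fixes G :: "'a::field poly mat"
  assumes "r \<le> m" and G: "G \<in> carrier_mat r n"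
  shows "(\<exists>U \<in> carrier_mat m m. unimodular U \<and> S = U * (G @\<^sub>r 0\<^sub>m (m - r) n)) \<longleftrightarrow>
         (\<exists>N \<in> carrier_mat m r. left_invertible N \<and> S = N * G)"
proof -
  let ?T = "1\<^sub>m r @\<^sub>r 0\<^sub>m (m - r) r :: 'a poly mat"
  have T: "?T \<in> carrier_mat m r"
    using carrier_append_rows[of "1\<^sub>m r" r r "0\<^sub>m (m - r) r" "m - r"] \<open>r \<le> m\<close> by simp
  have TG: "?T * G = G @\<^sub>r 0\<^sub>m (m - r) n"
    using append_rows_mult[OF one_carrier_mat zero_carrier_mat G] G by simp
  show ?thesis
  proof
    assume "\<exists>U \<in> carrier_mat m m. unimodular U \<and> S = U * (G @\<^sub>r 0\<^sub>m (m - r) n)"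
    then obtain U where U: "U \<in> carrier_mat m m" "unimodular U"
      and S: "S = U * (G @\<^sub>r 0\<^sub>m (m - r) n)" by blast
    have "left_invertible (U * ?T)"
      using U T left_invertible_identity_block
      by (intro left_invertible_mult) (auto simp: unimodular_iff_left_invertible)
    moreover have "S = (U * ?T) * G" using S TG by (simp add: assoc_mult_mat[OF U(1) T G])
    ultimately show "\<exists>N \<in> carrier_mat m r. left_invertible N \<and> S = N * G" using U T by auto
  next
    assume "\<exists>N \<in> carrier_mat m r. left_invertible N \<and> S = N * G"
    then obtain N where N: "N \<in> carrier_mat m r" "left_invertible N" and S: "S = N * G" by blast
    obtain U where U: "U \<in> carrier_mat m m" "unimodular U" and "N = U * ?T"
      using unimodular_completion_of_left_invertible[OF N \<open>r \<le> m\<close>] by blast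
    then have "S = U * (G @\<^sub>r 0\<^sub>m (m - r) n)" using S TG by (simp add: assoc_mult_mat[OF U(1) T G])
    then show "\<exists>U \<in> carrier_mat m m. unimodular U \<and> S = U * (G @\<^sub>r 0\<^sub>m (m - r) n)"
      using U by blast
  qed
qed

lemma map_nth_upt_eq_map2:
  "length xs = length ys \<Longrightarrow> map (\<lambda>i. f (xs ! i) (ys ! i)) [0..<length ys] = map2 f xs ys"
  by (auto intro!: nth_equalityI)

lemma stack_Nil [simp]: "stack n [] = 0\<^sub>m 0 n"
  unfolding stack_def by simp

lemma stack_Cons [simp]: "stack n (P # Ps) = P @\<^sub>r stack n Ps"
  unfolding stack_def by simp

lemma stack_carrier:
  "\<forall>P \<in> set Ps. dim_col P = n \<Longrightarrow> stack n Ps \<in> carrier_mat (sum_list (map dim_row Ps)) n"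
proof (induction Ps)
  case (Cons P Ps)
  have "P \<in> carrier_mat (dim_row P) n" using Cons.prems by (intro carrier_matI) simp_all
  moreover have "stack n Ps \<in> carrier_mat (sum_list (map dim_row Ps)) n" using Cons by simp
  ultimately have "P @\<^sub>r stack n Ps \<in> carrier_mat (dim_row P + sum_list (map dim_row Ps)) n"
    by (rule carrier_append_rows)
  then show ?case by simp
qed simp

lemma stack_eq_mult_iff:
  assumes "\<forall>P \<in> set Ps. dim_col P = n" and D: "D \<in> carrier_mat p n"
  shows "(\<forall>P \<in> set Ps. \<exists>Q \<in> carrier_mat (dim_row P) p. P = Q * D) \<longleftrightarrow>
         (\<exists>Q \<in> carrier_mat (sum_list (map dim_row Ps)) p. stack n Ps = Q * D)"
  using assms(1)
proof (induction Ps)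
  case Nil
  have "stack n [] = 0\<^sub>m 0 p * D" using D by (intro eq_matI) auto
  then show ?case by auto
next
  case (Cons P Ps)
  have P: "P \<in> carrier_mat (dim_row P) n" using Cons.prems by (intro carrier_matI) simp_all
  have "stack n Ps \<in> carrier_mat (sum_list (map dim_row Ps)) n"
    using Cons.prems stack_carrier[of Ps n] by simp
  from append_rows_eq_mult_iff[OF P this D] show ?case using Cons by simp
qed

lemma is_CRD_iff_stack_factor:
  assumes "\<forall>P \<in> set Ps. dim_col P = n"
  shows "is_CRD n Ps D \<longleftrightarrow> dim_col D = n \<and>
    (\<exists>Q \<in> carrier_mat (sum_list (map dim_row Ps)) (dim_row D). stack n Ps = Q * D)"
proof (cases "dim_col D = n")
  case True
  then have D: "D \<in> carrier_mat (dim_row D) n" by (intro carrier_matI) simp_all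
  show ?thesis using stack_eq_mult_iff[OF assms D] True unfolding is_CRD_def by simp
qed (simp add: is_CRD_def)

lemma mult_stack_eq_sum:
  assumes "\<forall>P \<in> set Ps. dim_col P = n" and "L \<in> carrier_mat r (sum_list (map dim_row Ps))"
  shows "\<exists>Ls. list_all2 (\<lambda>Li P. Li \<in> carrier_mat r (dim_row P)) Ls Ps \<and>
    L * stack n Ps = foldr (+) (map2 (*) Ls Ps) (0\<^sub>m r n)"
  using assms
proof (induction Ps arbitrary: L)
  case Nil
  then show ?case by (intro exI[of _ "[]"]) (auto intro!: eq_matI simp: scalar_prod_def)
next
  case (Cons P Ps)
  have P: "P \<in> carrier_mat (dim_row P) n" using Cons.prems(1) by (intro carrier_matI) simp_all
  have S: "stack n Ps \<in> carrier_mat (sum_list (map dim_row Ps)) n"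
    using Cons.prems(1) stack_carrier[of Ps n] by simp
  obtain L1 L2 where L1: "L1 \<in> carrier_mat r (dim_row P)"
    and L2: "L2 \<in> carrier_mat r (sum_list (map dim_row Ps))"
    and split: "L * (P @\<^sub>r stack n Ps) = L1 * P + L2 * stack n Ps"
    using mult_append_rows_split[OF _ P S, of L r] Cons.prems(2) by auto
  obtain Ls where "list_all2 (\<lambda>Li P. Li \<in> carrier_mat r (dim_row P)) Ls Ps"
    and "L2 * stack n Ps = foldr (+) (map2 (*) Ls Ps) (0\<^sub>m r n)"
    using Cons.IH[OF _ L2] Cons.prems(1) by auto
  then show ?case using L1 split by (intro exI[of _ "L1 # Ls"]) simp
qed

lemma mult_stack_eq_sum_nth:
  assumes "\<forall>P \<in> set Ps. dim_col P = n" and L: "L \<in> carrier_mat r (sum_list (map dim_row Ps))"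
  shows "\<exists>Ls. length Ls = length Ps \<and> (\<forall>i < length Ps. Ls ! i \<in> carrier_mat r (dim_row (Ps ! i))) \<and>
    L * stack n Ps = foldr (+) (map (\<lambda>i. Ls ! i * Ps ! i) [0..<length Ps]) (0\<^sub>m r n)"
proof -
  obtain Ls where Ls: "list_all2 (\<lambda>Li P. Li \<in> carrier_mat r (dim_row P)) Ls Ps"
    and LS: "L * stack n Ps = foldr (+) (map2 (*) Ls Ps) (0\<^sub>m r n)"
    using mult_stack_eq_sum[OF assms] by blast
  have len: "length Ls = length Ps" using Ls by (rule list_all2_lengthD)
  moreover have "\<forall>i < length Ps. Ls ! i \<in> carrier_mat r (dim_row (Ps ! i))"
    using Ls by (simp add: list_all2_conv_all_nth)
  ultimately show ?thesis using LS map_nth_upt_eq_map2[OF len, of "(*)"] by auto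
qed

lemma rank_sum_outer_products:
  fixes f :: "nat \<Rightarrow> nat \<Rightarrow> 'a::field" and g :: "nat \<Rightarrow> nat \<Rightarrow> 'a"
  assumes "finite J"
  shows "vec_space.rank m (mat m n (\<lambda>(a, b). \<Sum>i\<in>J. f a i * g i b)) \<le> card J"
  using assms
proof (induction J rule: finite_induct)
  case empty
  have zero: "mat m n (\<lambda>(a, b). \<Sum>i\<in>{}. f a i * g i b) = 0\<^sub>m m n" by (rule eq_matI) auto
  show ?case unfolding zero by (simp add: vec_space.rank_0I)
next
  case (insert x J)
  let ?M = "mat m n (\<lambda>(a, b). \<Sum>i\<in>J. f a i * g i b)" and ?R = "mat m n (\<lambda>(a, b). f a x * g x b)"
  have split: "mat m n (\<lambda>(a, b). \<Sum>i\<in>insert x J. f a i * g i b) = ?M + ?R"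
    using insert by (intro eq_matI) auto
  have "vec_space.rank m ?R \<le> 1"
    by (rule vec_space.rank_le_1_product_entries) auto
  moreover have "vec_space.rank m (?M + ?R) \<le> vec_space.rank m ?M + vec_space.rank m ?R"
    by (rule vec_space.rank_subadditive) auto
  ultimately show ?case unfolding split using insert by simp
qed

lemma rank_lt_if_row_dependent:
  fixes G N :: "'a::field mat"
  assumes G: "G \<in> carrier_mat r n" and N: "N \<in> carrier_mat m r" and k: "k < r" and "\<mu> k \<noteq> 0"
    and dependent: "\<And>b. b < n \<Longrightarrow> (\<Sum>i = 0..<r. \<mu> i * G $$ (i, b)) = 0"
  shows "vec_space.rank m (N * G) < r"
proof -
  define J where "J = {0..<r} - {k}"
  have split: "(\<Sum>i = 0..<r. h i) = h k + (\<Sum>i\<in>J. h i)" for h :: "nat \<Rightarrow> 'a"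
    unfolding J_def using k by (simp add: sum.remove)
  \<comment> \<open>row k of G is a combination of the other rows, so N * G factors through the rows in J\<close>
  have row_k: "(\<Sum>i\<in>J. \<mu> i * G $$ (i, b)) = - (\<mu> k * G $$ (k, b))" if "b < n" for b
    using dependent[OF that] split[of "\<lambda>i. \<mu> i * G $$ (i, b)"] by (simp add: eq_neg_iff_add_eq_0 add.commute)
  define c where "c a i = N $$ (a, i) - N $$ (a, k) * \<mu> i / \<mu> k" for a i
  have "N * G = mat m n (\<lambda>(a, b). \<Sum>i\<in>J. c a i * G $$ (i, b))"
  proof (rule eq_matI)
    fix a b assume "a < dim_row (mat m n (\<lambda>(a, b). \<Sum>i\<in>J. c a i * G $$ (i, b)))"
      and "b < dim_col (mat m n (\<lambda>(a, b). \<Sum>i\<in>J. c a i * G $$ (i, b)))"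
    then have a: "a < m" and b: "b < n" by auto
    have "(\<Sum>i\<in>J. c a i * G $$ (i, b)) =
        (\<Sum>i\<in>J. N $$ (a, i) * G $$ (i, b)) - (N $$ (a, k) / \<mu> k) * (\<Sum>i\<in>J. \<mu> i * G $$ (i, b))"
      unfolding c_def by (simp add: sum_distrib_left sum_subtractf[symmetric] algebra_simps)
    also have "(N $$ (a, k) / \<mu> k) * (\<Sum>i\<in>J. \<mu> i * G $$ (i, b)) = - (N $$ (a, k) * G $$ (k, b))"
      using row_k[OF b] \<open>\<mu> k \<noteq> 0\<close> by simp
    also have "(\<Sum>i\<in>J. N $$ (a, i) * G $$ (i, b)) - - (N $$ (a, k) * G $$ (k, b)) =
        N $$ (a, k) * G $$ (k, b) + (\<Sum>i\<in>J. N $$ (a, i) * G $$ (i, b))"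
      by simp
    also have "\<dots> = (N * G) $$ (a, b)"
      using N G a b split[of "\<lambda>i. N $$ (a, i) * G $$ (i, b)"] by (simp add: scalar_prod_def)
    finally show "(N * G) $$ (a, b) = mat m n (\<lambda>(a, b). \<Sum>i\<in>J. c a i * G $$ (i, b)) $$ (a, b)"
      using a b by simp
  qed (use N G in auto)
  then have "vec_space.rank m (N * G) \<le> card J" by (simp add: rank_sum_outer_products J_def)
  also have "card J < r" using k by (simp add: J_def)
  finally show ?thesis .
qed

lemma mult_right_cancel_if_rank:
  fixes G N X Y :: "'a::field mat"
  assumes G: "G \<in> carrier_mat r n" and N: "N \<in> carrier_mat m r" and rank: "vec_space.rank m (N * G) = r"
    and X: "X \<in> carrier_mat k r" and Y: "Y \<in> carrier_mat k r" and XY: "X * G = Y * G"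
  shows "X = Y"
proof (rule eq_matI)
  fix a c assume "a < dim_row Y" "c < dim_col Y"
  then have a: "a < k" and c: "c < r" using Y by auto
  have dependent: "(\<Sum>i = 0..<r. (X $$ (a, i) - Y $$ (a, i)) * G $$ (i, b)) = 0" if "b < n" for b
  proof -
    have "(X * G) $$ (a, b) = (Y * G) $$ (a, b)" using XY by simp
    then show ?thesis
      using X Y G a that by (simp add: scalar_prod_def left_diff_distrib sum_subtractf)
  qed
  show "X $$ (a, c) = Y $$ (a, c)"
  proof (rule ccontr)
    assume "X $$ (a, c) \<noteq> Y $$ (a, c)"
    then have "vec_space.rank m (N * G) < r"
      by (intro rank_lt_if_row_dependent[OF G N c _ dependent]) simp
    then show False using rank by simp
  qed
qed (use X Y in auto)

lemma to_fract_sum: "to_fract (sum f S) = (\<Sum>x\<in>S. to_fract (f x))"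
  by (induction S rule: infinite_finite_induct) auto

lemma map_mat_to_fract_mult:
  assumes "A \<in> carrier_mat p k" and "B \<in> carrier_mat k q"
  shows "map_mat to_fract (A * B) = map_mat to_fract A * map_mat to_fract B"
  using assms by (intro eq_matI) (auto simp: scalar_prod_def to_fract_sum)

lemma map_mat_to_fract_inject:
  assumes "map_mat to_fract A = map_mat to_fract B"
  shows "A = B"
proof -
  have dims: "dim_row A = dim_row B" "dim_col A = dim_col B"
    using arg_cong[OF assms, of dim_row] arg_cong[OF assms, of dim_col] by simp_all
  have "A $$ (i, j) = B $$ (i, j)" if "i < dim_row B" "j < dim_col B" for i j
    using arg_cong[OF assms, of "\<lambda>M. M $$ (i, j)"] dims that by simp
  then show ?thesis using dims by (intro eq_matI) auto
qed

lemma mult_right_cancel_if_normal_rank: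
  fixes G N X Y :: "'a::field poly mat"
  assumes G: "G \<in> carrier_mat r n" and N: "N \<in> carrier_mat m r" and rank: "normal_rank (N * G) = r"
    and X: "X \<in> carrier_mat k r" and Y: "Y \<in> carrier_mat k r" and XY: "X * G = Y * G"
  shows "X = Y"
proof -
  let ?F = "map_mat to_fract"
  have "vec_space.rank m (?F N * ?F G) = r"
    using rank N G map_mat_to_fract_mult[OF N G] unfolding normal_rank_def by simp
  moreover have "?F X * ?F G = ?F Y * ?F G"
    using XY map_mat_to_fract_mult[OF X G] map_mat_to_fract_mult[OF Y G] by simp
  ultimately have "?F X = ?F Y"
    using mult_right_cancel_if_rank[of "?F G" r n "?F N" m "?F X" k "?F Y"] X Y G N
    unfolding map_carrier_mat by blast
  then show ?thesis by (rule map_mat_to_fract_inject)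
qed

lemma left_multiple_if_left_invertible_factor:
  assumes N: "N \<in> carrier_mat m r" "left_invertible N" and G: "G \<in> carrier_mat r n" and "S = N * G"
  shows "\<exists>L \<in> carrier_mat r m. G = L * S"
proof -
  obtain L where L: "L \<in> carrier_mat r m" "L * N = 1\<^sub>m r"
    using N(2,1) by (rule left_invertibleE)
  have "G = (L * N) * G" using L(2) G by simp
  then have "G = L * S" using \<open>S = N * G\<close> assoc_mult_mat[OF L(1) N(1) G] by simp
  then show ?thesis using L(1) by blast
qed

lemma GCRD_if_left_invertible_factor:
  assumes dc: "\<forall>P \<in> set Ps. dim_col P = n" and G: "G \<in> carrier_mat r n"
    and N: "N \<in> carrier_mat (sum_list (map dim_row Ps)) r" "left_invertible N"
    and factor: "stack n Ps = N * G"
  shows "is_GCRD n Ps G"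
proof -
  have "is_CRD n Ps G" using G N factor by (auto simp: is_CRD_iff_stack_factor[OF dc])
  moreover have "\<exists>Q \<in> carrier_mat (dim_row G) (dim_row D). G = Q * D" if "is_CRD n Ps D" for D
  proof -
    define p where "p = dim_row D"
    have "dim_col D = n \<and> (\<exists>Q \<in> carrier_mat (sum_list (map dim_row Ps)) p. stack n Ps = Q * D)"
      using that is_CRD_iff_stack_factor[OF dc] unfolding p_def by blast
    then obtain Q where Q: "Q \<in> carrier_mat (sum_list (map dim_row Ps)) p"
      and PQ: "stack n Ps = Q * D" and "dim_col D = n" by blast
    then have D: "D \<in> carrier_mat p n" unfolding p_def by (intro carrier_matI) simp_all
    obtain L where L: "L \<in> carrier_mat r (sum_list (map dim_row Ps))" "L * N = 1\<^sub>m r"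
      using N(2,1) by (rule left_invertibleE)
    have "G = (L * N) * G" using L G by simp
    also have "\<dots> = L * (Q * D)" using factor PQ assoc_mult_mat[OF L(1) N(1) G] by simp
    also have "\<dots> = (L * Q) * D" using assoc_mult_mat[OF L(1) Q D] by simp
    finally have "G = (L * Q) * D" .
    moreover have "L * Q \<in> carrier_mat (dim_row G) (dim_row D)"
      using mult_carrier_mat[OF L(1) Q] carrier_matD(1)[OF G] unfolding p_def by simp
    ultimately show ?thesis by blast
  qed
  ultimately show ?thesis unfolding is_GCRD_def by (intro conjI allI impI)
qed

lemma left_invertible_factor_if_GCRD:
  fixes Ps :: "'a::field poly mat list"
  assumes dc: "\<forall>P \<in> set Ps. dim_col P = n" and G: "G \<in> carrier_mat r n"
    and rank: "normal_rank (stack n Ps) = r" and GCRD: "is_GCRD n Ps G"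
  shows "\<exists>N \<in> carrier_mat (sum_list (map dim_row Ps)) r. left_invertible N \<and> stack n Ps = N * G"
proof -
  let ?m = "sum_list (map dim_row Ps)"
  have S: "stack n Ps \<in> carrier_mat ?m n" by (rule stack_carrier[OF dc])
  obtain N where N: "N \<in> carrier_mat ?m r" and factor: "stack n Ps = N * G"
    using GCRD G unfolding is_GCRD_def by (auto simp: is_CRD_iff_stack_factor[OF dc])
  have "is_CRD n Ps (stack n Ps)"
    using S by (auto simp: is_CRD_iff_stack_factor[OF dc] intro!: bexI[of _ "1\<^sub>m ?m"])
  then obtain Q where Q: "Q \<in> carrier_mat r ?m" and "G = Q * stack n Ps"
    using GCRD G S unfolding is_GCRD_def by auto
  then have eq: "(Q * N) * G = 1\<^sub>m r * G" using G factor by (simp add: assoc_mult_mat[OF Q N G])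
  have "normal_rank (N * G) = r" using rank factor by simp
  from mult_right_cancel_if_normal_rank[OF G N this mult_carrier_mat[OF Q N] one_carrier_mat eq]
  have "Q * N = 1\<^sub>m r" .
  then have "left_invertible N" by (rule left_invertibleI[OF N Q])
  then show ?thesis using N factor by blast
qed

theorem theorem2p9:
  fixes Ps :: "'a::field poly mat list" and n m r :: nat and G :: "'a poly mat"
  assumes "Ps \<noteq> []"
    and "\<forall>P \<in> set Ps. dim_col P = n"
    and "m = sum_list (map dim_row Ps)"
    and "m \<ge> n"
    and "r = normal_rank (stack n Ps)"
    and "r \<ge> 1"
    and "G \<in> carrier_mat r n"
  shows "(is_compact_GCRD n Ps G \<longleftrightarrow>
            (\<exists>N \<in> carrier_mat m r. left_invertible N \<and> stack n Ps = N * G))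
       \<and> (is_compact_GCRD n Ps G \<longleftrightarrow>
            (\<exists>U \<in> carrier_mat m m. unimodular U \<and>
               stack n Ps = U * (G @\<^sub>r 0\<^sub>m (m - r) n)))
       \<and> (is_compact_GCRD n Ps G \<longrightarrow>
            (\<exists>Ls. length Ls = length Ps \<and>
               (\<forall>i < length Ps. Ls ! i \<in> carrier_mat r (dim_row (Ps ! i))) \<and>
               G = foldr (+) (map (\<lambda>i. Ls ! i * Ps ! i) [0..<length Ps]) (0\<^sub>m r n))
          \<and> (\<exists>L \<in> carrier_mat r m. G = L * stack n Ps))"
proof -
  note dc = assms(2) and G = assms(7)
  have m: "sum_list (map dim_row Ps) = m" using assms(3) by simp
  have "r \<le> m"
    using vec_space.rank_le_nc[of "map_mat to_fract (stack n Ps)" m n] stack_carrier[OF dc, unfolded m]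
      assms(4,5) unfolding normal_rank_def by simp
  have "is_compact_GCRD n Ps G \<longleftrightarrow> is_GCRD n Ps G"
    using G assms(5) unfolding is_compact_GCRD_def by simp
  then have factor: "is_compact_GCRD n Ps G \<longleftrightarrow>
      (\<exists>N \<in> carrier_mat m r. left_invertible N \<and> stack n Ps = N * G)"
    using left_invertible_factor_if_GCRD[OF dc G assms(5)[symmetric], unfolded m]
      GCRD_if_left_invertible_factor[OF dc G, unfolded m] by blast
  moreover have "is_compact_GCRD n Ps G \<longleftrightarrow>
      (\<exists>U \<in> carrier_mat m m. unimodular U \<and> stack n Ps = U * (G @\<^sub>r 0\<^sub>m (m - r) n))"
    using factor unimodular_factor_iff_left_invertible_factor[OF \<open>r \<le> m\<close> G, of "stack n Ps"] by simp
  moreover have left_multiple: "\<exists>L \<in> carrier_mat r m. G = L * stack n Ps" if "is_compact_GCRD n Ps G"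
    using that factor left_multiple_if_left_invertible_factor[OF _ _ G] by blast
  moreover have "\<exists>Ls. length Ls = length Ps \<and>
      (\<forall>i < length Ps. Ls ! i \<in> carrier_mat r (dim_row (Ps ! i))) \<and>
      G = foldr (+) (map (\<lambda>i. Ls ! i * Ps ! i) [0..<length Ps]) (0\<^sub>m r n)"
    if C: "is_compact_GCRD n Ps G"
  proof -
    obtain L where L: "L \<in> carrier_mat r m" and GL: "G = L * stack n Ps"
      using left_multiple[OF C] by blast
    show ?thesis using mult_stack_eq_sum_nth[OF dc, unfolded m, OF L, folded GL] .
  qed
  ultimately show ?thesis by (intro conjI impI) blast+
qed

end
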